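(* Let $n\ge 2$, $\delta\in(0,1/2)$, let $g$ be admissible with $$-\infty<\liminf_{x\downarrow 0}x g(x)\le\limsup_{x\downarrow 0}x g(x)<0,$$ and let $X$ be the market model driven by $g$ with all $\mu_i(0)\in(0,1-\delta)$. Then, almost surely, no market weight $\mu_i$ ever reaches $0$ (up to the first time some market weight reaches $1-\delta$).
   Context: Fix an integer $n\ge 2$ and $\delta\in(0,1)$. A continuous function $g:(0,1-\delta)\to\mathbb{R}$ is called admissible if $\lim_{x\uparrow 1-\delta}g(x)=+\infty$. Let $W=(W_1,\dots,W_n)$ be an $n$-dimensional standard Brownian motion on a filtered probability space whose filtration satisfies the usual conditions and is generated by $W$. The market model driven by $g$ is an $(0,\infty)^n$-valued continuous process $X(t)=(X_1(t),\dots,X_n(t))$ satisfying $$d\log X_i(t)=-g(\mu_i(t))\,dt+dW_i(t),\qquad i=1,\dots,n,$$ where $S(t)=X_1(t)+\dots+X_n(t)$ and $\mu_i(t)=X_i(t)/S(t)$ are the market weights (the equation makes sense as long as all $\mu_i(t)\in(0,1-\delta)$). *)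

theory Defs
  imports "HOL-Probability.Probability"
begin

definition admissible :: "real \<Rightarrow> (real \<Rightarrow> real) \<Rightarrow> bool" where
  "admissible \<delta> g \<longleftrightarrow> continuous_on {0<..<1-\<delta>} g \<and> filterlim g at_top (at_left (1-\<delta>))"

definition std_BM :: "'a measure \<Rightarrow> nat \<Rightarrow> (nat \<Rightarrow> real \<Rightarrow> 'a \<Rightarrow> real) \<Rightarrow> bool" where
  "std_BM M n W \<longleftrightarrow>
     (\<forall>i<n. \<forall>t\<ge>0. W i t \<in> borel_measurable M) \<and>
     (\<forall>\<omega>\<in>space M. \<forall>i<n. W i 0 \<omega> = 0 \<and> continuous_on {0..} (\<lambda>t. W i t \<omega>)) \<and>
     (\<forall>i<n. \<forall>s t. 0 \<le> s \<and> s < t \<longrightarrow>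
        distributed M lborel (\<lambda>\<omega>. W i t \<omega> - W i s \<omega>)
          (\<lambda>x. ennreal (normal_density 0 (sqrt (t - s)) x))) \<and>
     (\<forall>ts :: real list. sorted_wrt (<) ts \<and> ts \<noteq> [] \<and> 0 \<le> hd ts \<longrightarrow>
        prob_space.indep_vars M (\<lambda>_. borel)
          (\<lambda>(i, k) \<omega>. W i (ts ! Suc k) \<omega> - W i (ts ! k) \<omega>)
          ({..<n} \<times> {..<length ts - 1}))"

definition bm_gen :: "'a measure \<Rightarrow> nat \<Rightarrow> (nat \<Rightarrow> real \<Rightarrow> 'a \<Rightarrow> real) \<Rightarrow> real \<Rightarrow> 'a set set" where
  "bm_gen M n W t = {(\<lambda>\<omega>. W i s \<omega>) -` B \<inter> space M | i s B. i < n \<and> 0 \<le> s \<and> s \<le> t \<and> B \<in> sets borel}"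

text \<open>Usual augmentation of the natural filtration of W (right-continuous, completed
  with all null sets of M).\<close>
definition bm_filt :: "'a measure \<Rightarrow> nat \<Rightarrow> (nat \<Rightarrow> real \<Rightarrow> 'a \<Rightarrow> real) \<Rightarrow> real \<Rightarrow> 'a set set" where
  "bm_filt M n W t = {A. A \<subseteq> space M \<and> (\<exists>B N.
      B \<in> (\<Inter>u\<in>{t<..}. sigma_sets (space M) (bm_gen M n W u)) \<and> N \<in> null_sets M \<and>
      (A - B) \<union> (B - A) \<subseteq> N)}"

definition adapted_to :: "'a measure \<Rightarrow> (real \<Rightarrow> 'a set set) \<Rightarrow> (real \<Rightarrow> 'a \<Rightarrow> real) \<Rightarrow> bool" where
  "adapted_to M F Y \<longleftrightarrow> (\<forall>t\<ge>0. \<forall>B\<in>sets borel. (Y t) -` B \<inter> space M \<in> F t)"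

definition cap :: "nat \<Rightarrow> (nat \<Rightarrow> real \<Rightarrow> 'a \<Rightarrow> real) \<Rightarrow> real \<Rightarrow> 'a \<Rightarrow> real" where
  "cap n X t \<omega> = (\<Sum>j<n. X j t \<omega>)"

definition mweight :: "nat \<Rightarrow> (nat \<Rightarrow> real \<Rightarrow> 'a \<Rightarrow> real) \<Rightarrow> nat \<Rightarrow> real \<Rightarrow> 'a \<Rightarrow> real" where
  "mweight n X i t \<omega> = X i t \<omega> / cap n X t \<omega>"

definition solves_on :: "nat \<Rightarrow> real \<Rightarrow> (real \<Rightarrow> real) \<Rightarrow> (nat \<Rightarrow> real \<Rightarrow> 'a \<Rightarrow> real)
    \<Rightarrow> (nat \<Rightarrow> real \<Rightarrow> 'a \<Rightarrow> real) \<Rightarrow> real \<Rightarrow> 'a \<Rightarrow> bool" where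
  "solves_on n \<delta> g W X T \<omega> \<longleftrightarrow>
     (\<forall>i<n. continuous_on {0..<T} (\<lambda>t. X i t \<omega>)) \<and>
     (\<forall>i<n. \<forall>t\<in>{0..<T}. X i t \<omega> > 0 \<and> mweight n X i t \<omega> \<in> {0<..<1-\<delta>}) \<and>
     (\<forall>i<n. \<forall>t\<in>{0..<T}.
        ln (X i t \<omega>) = ln (X i 0 \<omega>) - integral {0..t} (\<lambda>s. g (mweight n X i s \<omega>))
                          + (W i t \<omega> - W i 0 \<omega>))"

end

theory Submission
  imports Defs
begin

text \<open>The argument is pathwise. Write \<open>ln X\<^sub>k = D\<^sub>k + w\<^sub>k\<close> with the drift
  \<open>D\<^sub>k(t) = ln X\<^sub>k(0) - \<integral>\<^sub>0\<^sup>t g(\<mu>\<^sub>k)\<close> and the noise \<open>w\<^sub>k = W\<^sub>k - W\<^sub>k(0)\<close>, which is bounded by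
  some \<open>B\<close> on \<open>[0,T]\<close>. Since \<open>g\<close> is bounded below by \<open>-L\<close> on \<open>[exp(-2B)/n, 1-\<delta>)\<close> and tends to
  \<open>-\<infinity>\<close> at \<open>0\<close> (the Limsup condition), there is \<open>\<eta> > 0\<close> with \<open>g < -L\<close> on \<open>(0,\<eta>)\<close>.
  Suppose a gap \<open>D\<^sub>k - D\<^sub>i\<close> reaches a large constant \<open>c\<close>; at the first such time let \<open>j\<close> have
  maximal drift. Then \<open>\<mu>\<^sub>j \<ge> exp(-2B)/n\<close>, so \<open>g(\<mu>\<^sub>j) \<ge> -L\<close>, while \<open>\<mu>\<^sub>i \<le> exp(2B - c) < \<eta>\<close>, so
  \<open>g(\<mu>\<^sub>i) < -L\<close>: the gap \<open>D\<^sub>j - D\<^sub>i\<close>, with derivative \<open>g(\<mu>\<^sub>j) - g(\<mu>\<^sub>i) > 0\<close>, was already at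
  least \<open>c\<close> slightly earlier, a contradiction. Bounded gaps bound the ratios \<open>X\<^sub>k/X\<^sub>i\<close> and hence
  \<open>\<mu>\<^sub>i\<close> from below.\<close>

lemma bounded_below_if_tendsto_at_top_at_left:
  fixes g :: "real \<Rightarrow> real"
  assumes cont: "continuous_on {c<..<b} g" and lim: "filterlim g at_top (at_left b)" and "c < a"
  shows "\<exists>L. \<forall>y\<in>{a..<b}. -L \<le> g y"
proof (cases "a < b")
  case True
  have "\<forall>\<^sub>F y in at_left b. 0 \<le> g y"
    using lim unfolding filterlim_at_top by blast
  then obtain b' where "b' < b" and nonneg: "\<And>y. b' < y \<Longrightarrow> y < b \<Longrightarrow> 0 \<le> g y"
    using eventually_at_left[of a b] True by auto
  define a' where "a' = max a ((b' + b) / 2)"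
  have "a' < b"
    using True \<open>b' < b\<close> by (simp add: a'_def)
  then have "{a..a'} \<subseteq> {c<..<b}"
    using \<open>c < a\<close> by auto
  then have "bounded (g ` {a..a'})"
    by (intro compact_imp_bounded compact_continuous_image continuous_on_subset[OF cont]) auto
  then obtain K where K: "\<forall>y\<in>{a..a'}. \<bar>g y\<bar> \<le> K"
    unfolding bounded_real by blast
  have "-\<bar>K\<bar> \<le> g y" if "y \<in> {a..<b}" for y
  proof (cases "y \<le> a'")
    case True
    then show ?thesis using K that by force
  next
    case False
    then have "b' < y"
      using \<open>b' < b\<close> by (simp add: a'_def max_def split: if_splits)
    then show ?thesis
      using nonneg that by force
  qed
  then show ?thesis by blast
qed auto

lemma filterlim_at_bot_at_right_0_if_Limsup_mult_neg:
  fixes g :: "real \<Rightarrow> real"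
  assumes "Limsup (at_right 0) (\<lambda>x. ereal (x * g x)) < 0"
  shows "filterlim g at_bot (at_right 0)"
  unfolding filterlim_at_bot
proof
  fix Z :: real
  obtain c where c: "Limsup (at_right 0) (\<lambda>x. ereal (x * g x)) < ereal c" "ereal c < 0"
    using ereal_dense2[OF assms] by blast
  have "\<forall>\<^sub>F x in at_right 0. x * g x < c"
    using Limsup_lessD[OF c(1)] by simp
  moreover have "filterlim (\<lambda>x. c * inverse x) at_bot (at_right (0::real))"
    using filterlim_tendsto_neg_mult_at_bot[OF tendsto_const _ filterlim_inverse_at_top_right] c(2)
    by simp
  then have "\<forall>\<^sub>F x in at_right 0. c * inverse x \<le> Z"
    unfolding filterlim_at_bot by blast
  ultimately show "\<forall>\<^sub>F x in at_right 0. g x \<le> Z"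
    using eventually_at_right_less[of 0]
  proof eventually_elim
    case (elim x)
    then have "g x \<le> c * inverse x"
      using pos_le_divide_eq[of x "g x" c] by (simp add: divide_inverse mult.commute)
    then show ?case
      using elim by linarith
  qed
qed

lemma le_exp_mult_if_ln_diff_le:
  fixes a b c :: real
  assumes "0 < a" "0 < b" "ln a - ln b \<le> c"
  shows "a \<le> exp c * b"
proof -
  have "ln a \<le> ln (exp c * b)"
    using assms by (simp add: ln_mult)
  then show ?thesis
    using assms by simp
qed

lemma share_ge_if_dominates:
  fixes x :: "nat \<Rightarrow> real"
  assumes "j < n" "0 < C" "\<And>k. k < n \<Longrightarrow> 0 < x k" "\<And>k. k < n \<Longrightarrow> x k \<le> C * x j"
  shows "1 / (real n * C) \<le> x j / (\<Sum>k<n. x k)"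
proof -
  have "(\<Sum>k<n. x k) \<le> real n * C * x j"
    using sum_bounded_above[of "{..<n}" x "C * x j"] assms(4) by simp
  moreover have "0 < (\<Sum>k<n. x k)" "0 < x j" "0 < real n"
    using assms by (auto intro: sum_pos)
  ultimately show ?thesis
    using assms(2) by (simp add: divide_simps) (simp add: algebra_simps)
qed

lemma first_crossing_time:
  fixes P :: "'i \<Rightarrow> real \<Rightarrow> real"
  assumes "finite K" and cont: "\<And>k. k \<in> K \<Longrightarrow> continuous_on {0..t} (P k)"
    and start: "\<And>k. k \<in> K \<Longrightarrow> P k 0 < c"
    and cross: "j \<in> K" "0 \<le> t" "c \<le> P j t"
  shows "\<exists>t0\<in>{0<..t}. (\<exists>k\<in>K. c \<le> P k t0) \<and> (\<forall>s\<in>{0..<t0}. \<forall>k\<in>K. P k s < c)"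
proof -
  define A where "A = (\<Union>k\<in>K. {0..t} \<inter> P k -` {c..})"
  have "closed A"
    unfolding A_def using \<open>finite K\<close> cont by (intro closed_UN ballI continuous_closed_preimage) auto
  moreover have "t \<in> A" "bdd_below A"
    using cross by (auto simp: A_def intro: bdd_belowI[of _ 0])
  ultimately have "Inf A \<in> A"
    by (intro closed_contains_Inf) auto
  then obtain k where k: "k \<in> K" "Inf A \<in> {0..t}" "c \<le> P k (Inf A)"
    by (auto simp: A_def)
  have "Inf A \<noteq> 0"
    using start[OF k(1)] k(3) by auto
  then have "0 < Inf A"
    using k(2) by auto
  moreover have "P k s < c" if "k \<in> K" "s \<in> {0..<Inf A}" for k s
  proof -
    have "s \<notin> A"
      using that \<open>bdd_below A\<close> cInf_lower[of s A] by auto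
    then show ?thesis
      using that k(2) by (auto simp: A_def)
  qed
  ultimately show ?thesis
    using k by auto
qed

lemma exists_before_integral_le:
  fixes h :: "real \<Rightarrow> real"
  assumes cont: "continuous_on {0..t} h" and "0 < t" "0 < h t"
  shows "\<exists>s\<in>{0..<t}. integral {0..s} h \<le> integral {0..t} h"
proof -
  have "t \<in> {0..t}"
    using \<open>0 < t\<close> by auto
  then obtain d where "0 < d" and near: "\<And>s. s \<in> {0..t} \<Longrightarrow> dist s t < d \<Longrightarrow> dist (h s) (h t) < h t"
    using cont \<open>0 < h t\<close> unfolding continuous_on_iff by blast
  define s where "s = max 0 (t - d / 2)"
  have s: "0 \<le> s" "s < t"
    using \<open>0 < t\<close> \<open>0 < d\<close> by (auto simp: s_def)
  have "0 \<le> h u" if "u \<in> {s..t}" for u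
    using near[of u] that s \<open>0 < d\<close> by (force simp: dist_real_def s_def)
  moreover have "h integrable_on {0..t}"
    using cont by (rule integrable_continuous_interval)
  ultimately have "0 \<le> integral {s..t} h"
    using s by (intro integral_nonneg integrable_on_subinterval[OF \<open>h integrable_on {0..t}\<close>]) auto
  moreover have "integral {0..s} h + integral {s..t} h = integral {0..t} h"
    using s \<open>h integrable_on {0..t}\<close> by (intro Henstock_Kurzweil_Integration.integral_combine) auto
  ultimately have "integral {0..s} h \<le> integral {0..t} h"
    by linarith
  then show ?thesis
    using s by auto
qed

lemma uniform_bound_if_continuous_on:
  fixes f :: "'i \<Rightarrow> real \<Rightarrow> real"
  assumes "finite K" "\<And>k. k \<in> K \<Longrightarrow> continuous_on {a..b} (f k)"
  shows "\<exists>B. \<forall>k\<in>K. \<forall>t\<in>{a..b}. \<bar>f k t\<bar> \<le> B"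
proof -
  have "bounded (\<Union>k\<in>K. f k ` {a..b})"
    using assms by (intro compact_imp_bounded compact_UN compact_continuous_image) auto
  then show ?thesis
    by (auto simp: bounded_real)
qed

text \<open>A single path of the market model: \<open>x\<close> and \<open>w\<close> stand for \<open>X(\<cdot>, \<omega>)\<close> and
  \<open>W(\<cdot>, \<omega>) - W(0, \<omega>)\<close>, the latter bounded by \<open>B\<close> on \<open>[0, T)\<close>.\<close>
locale market_path =
  fixes n :: nat and \<delta> T B :: real and g :: "real \<Rightarrow> real" and x w :: "nat \<Rightarrow> real \<Rightarrow> real"
  assumes n_pos: "0 < n"
    and x_cont: "\<And>k. k < n \<Longrightarrow> continuous_on {0..<T} (x k)"
    and x_pos: "\<And>k t. k < n \<Longrightarrow> t \<in> {0..<T} \<Longrightarrow> 0 < x k t"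
    and share_range: "\<And>k t. k < n \<Longrightarrow> t \<in> {0..<T} \<Longrightarrow> x k t / (\<Sum>j<n. x j t) \<in> {0<..<1-\<delta>}"
    and ln_x: "\<And>k t. k < n \<Longrightarrow> t \<in> {0..<T} \<Longrightarrow>
      ln (x k t) = ln (x k 0) - integral {0..t} (\<lambda>s. g (x k s / (\<Sum>j<n. x j s))) + w k t"
    and noise_bound: "\<And>k t. k < n \<Longrightarrow> t \<in> {0..<T} \<Longrightarrow> \<bar>w k t\<bar> \<le> B"
    and g_cont: "continuous_on {0<..<1-\<delta>} g"
    and g_at_top: "filterlim g at_top (at_left (1-\<delta>))"
    and g_at_bot: "filterlim g at_bot (at_right 0)"
begin

definition weight :: "nat \<Rightarrow> real \<Rightarrow> real" where
  "weight k t = x k t / (\<Sum>j<n. x j t)"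

definition drift :: "nat \<Rightarrow> real \<Rightarrow> real" where
  "drift k t = ln (x k 0) - integral {0..t} (\<lambda>s. g (weight k s))"

lemma ln_x_eq_drift:
  assumes "k < n" "t \<in> {0..<T}"
  shows "ln (x k t) = drift k t + w k t"
  using ln_x[OF assms] unfolding drift_def weight_def by simp

lemma weight_range:
  assumes "k < n" "t \<in> {0..<T}"
  shows "weight k t \<in> {0<..<1-\<delta>}"
  using share_range[OF assms] unfolding weight_def .

lemma sum_x_pos: "t \<in> {0..<T} \<Longrightarrow> 0 < (\<Sum>j<n. x j t)"
  using x_pos n_pos by (intro sum_pos) auto

lemma continuous_on_g_weight:
  assumes "k < n"
  shows "continuous_on {0..<T} (\<lambda>s. g (weight k s))"
proof -
  have "continuous_on {0..<T} (weight k)"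
    unfolding weight_def using x_cont assms sum_x_pos
    by (intro continuous_on_divide continuous_on_sum) (auto simp: less_le)
  then show ?thesis
    by (rule continuous_on_compose2[OF g_cont]) (use weight_range assms in auto)
qed

lemma continuous_on_drift:
  assumes "k < n" "t \<in> {0..<T}"
  shows "continuous_on {0..t} (drift k)"
proof -
  have "(\<lambda>s. g (weight k s)) integrable_on {0..t}"
    using assms by (intro integrable_continuous_interval continuous_on_subset[OF continuous_on_g_weight]) auto
  then show ?thesis
    unfolding drift_def by (intro continuous_on_diff continuous_on_const indefinite_integral_continuous_1)
qed

lemma drift_gap_eq_integral:
  assumes "i < n" "j < n" "t \<in> {0..<T}"
  shows "drift j t - drift i t =
    ln (x j 0) - ln (x i 0) - integral {0..t} (\<lambda>s. g (weight j s) - g (weight i s))"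
proof -
  have "(\<lambda>s. g (weight k s)) integrable_on {0..t}" if "k < n" for k
    using assms that by (intro integrable_continuous_interval continuous_on_subset[OF continuous_on_g_weight]) auto
  then show ?thesis
    using assms by (simp add: drift_def integral_diff)
qed

lemma x_le_exp_mult_if_drift_gap_le:
  assumes "k < n" "j < n" "t \<in> {0..<T}" "drift k t - drift j t \<le> d"
  shows "x k t \<le> exp (d + 2 * B) * x j t"
proof (rule le_exp_mult_if_ln_diff_le)
  show "0 < x k t" "0 < x j t"
    using x_pos assms by auto
  have "ln (x k t) - ln (x j t) = drift k t - drift j t + (w k t - w j t)"
    using ln_x_eq_drift[of k t] ln_x_eq_drift[of j t] assms by simp
  moreover have "w k t - w j t \<le> 2 * B"
    using noise_bound[of k t] noise_bound[of j t] assms by (simp add: abs_le_iff)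
  ultimately show "ln (x k t) - ln (x j t) \<le> d + 2 * B"
    using assms(4) by linarith
qed

lemma weight_ge_if_max_drift:
  assumes "j < n" "t \<in> {0..<T}" "\<And>k. k < n \<Longrightarrow> drift k t \<le> drift j t"
  shows "1 / (real n * exp (2 * B)) \<le> weight j t"
  unfolding weight_def
proof (rule share_ge_if_dominates)
  fix k assume "k < n"
  then show "x k t \<le> exp (2 * B) * x j t"
    using x_le_exp_mult_if_drift_gap_le[of k j t 0] assms by simp
qed (use assms x_pos in auto)

lemma weight_le_exp_drift_gap:
  assumes "i < n" "j < n" "t \<in> {0..<T}"
  shows "weight i t \<le> exp (drift i t - drift j t + 2 * B)"
proof -
  have "x j t \<le> (\<Sum>k<n. x k t)"
    using assms x_pos by (intro member_le_sum) (auto intro: less_imp_le)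
  then have "weight i t \<le> x i t / x j t"
    unfolding weight_def using assms x_pos[of i t] x_pos[of j t]
    by (intro divide_left_mono) auto
  also have "\<dots> \<le> exp (drift i t - drift j t + 2 * B)"
    using x_le_exp_mult_if_drift_gap_le[OF assms order_refl] x_pos[of j t] assms
    by (simp add: divide_le_eq)
  finally show ?thesis .
qed

lemma drift_gap_attained_earlier:
  assumes "i < n" "j < n" "t \<in> {0<..<T}" "\<And>k. k < n \<Longrightarrow> drift k t \<le> drift j t"
    and L: "\<forall>y\<in>{1 / (real n * exp (2 * B))..<1-\<delta>}. -L \<le> g y"
    and \<eta>: "\<forall>y\<in>{0<..<\<eta>}. g y < -L"
    and small: "exp (drift i t - drift j t + 2 * B) < \<eta>"
  shows "\<exists>s\<in>{0..<t}. drift j t - drift i t \<le> drift j s - drift i s"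
proof -
  have t: "t \<in> {0..<T}" "0 < t"
    using assms(3) by auto
  have "-L \<le> g (weight j t)"
    using L weight_ge_if_max_drift[OF assms(2) t(1) assms(4)] weight_range[OF assms(2) t(1)] by auto
  moreover have "g (weight i t) < -L"
    using \<eta> weight_le_exp_drift_gap[OF assms(1,2) t(1)] small weight_range[OF assms(1) t(1)] by auto
  ultimately have "0 < g (weight j t) - g (weight i t)"
    by linarith
  moreover have "continuous_on {0..t} (\<lambda>s. g (weight j s) - g (weight i s))"
    using t assms(1,2)
    by (intro continuous_on_diff continuous_on_subset[OF continuous_on_g_weight]) auto
  ultimately obtain s where s: "s \<in> {0..<t}" and
    "integral {0..s} (\<lambda>s. g (weight j s) - g (weight i s))
       \<le> integral {0..t} (\<lambda>s. g (weight j s) - g (weight i s))"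
    using exists_before_integral_le t(2) by blast
  moreover have "s \<in> {0..<T}"
    using s t by auto
  ultimately show ?thesis
    using drift_gap_eq_integral[OF assms(1,2)] t(1) by force
qed

lemma g_level_separation:
  "\<exists>L \<eta>. 0 < \<eta> \<and> (\<forall>y\<in>{1 / (real n * exp (2 * B))..<1-\<delta>}. -L \<le> g y) \<and> (\<forall>y\<in>{0<..<\<eta>}. g y < -L)"
proof -
  have "0 < 1 / (real n * exp (2 * B))"
    using n_pos by simp
  then obtain L where L: "\<forall>y\<in>{1 / (real n * exp (2 * B))..<1-\<delta>}. -L \<le> g y"
    using bounded_below_if_tendsto_at_top_at_left[OF g_cont g_at_top] by blast
  have "\<forall>\<^sub>F y in at_right 0. g y < -L"
    using g_at_bot unfolding filterlim_at_bot_dense by blast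
  then obtain \<eta> where "0 < \<eta>" "\<forall>y\<in>{0<..<\<eta>}. g y < -L"
    using eventually_at_right[of 0 "1::real"] by auto
  with L show ?thesis
    by blast
qed

lemma drift_gap_bounded:
  assumes "i < n"
  shows "\<exists>c. \<forall>t\<in>{0..<T}. \<forall>k<n. drift k t - drift i t < c"
proof -
  obtain L \<eta> where "0 < \<eta>" and L: "\<forall>y\<in>{1 / (real n * exp (2 * B))..<1-\<delta>}. -L \<le> g y"
    and \<eta>: "\<forall>y\<in>{0<..<\<eta>}. g y < -L"
    using g_level_separation by blast
  define c where "c = (\<Sum>k<n. \<bar>drift k 0 - drift i 0\<bar>) + \<bar>2 * B - ln \<eta>\<bar> + 1"
  have start: "drift k 0 - drift i 0 < c" if "k \<in> {..<n}" for k
  proof -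
    have "\<bar>drift k 0 - drift i 0\<bar> \<le> (\<Sum>k<n. \<bar>drift k 0 - drift i 0\<bar>)"
      using that by (intro member_le_sum) auto
    then show ?thesis
      unfolding c_def by linarith
  qed
  have small: "exp (drift i t - drift j t + 2 * B) < \<eta>" if "c \<le> drift j t - drift i t" for j t
  proof -
    have "0 \<le> (\<Sum>k<n. \<bar>drift k 0 - drift i 0\<bar>)"
      by (intro sum_nonneg) auto
    then have "2 * B - c < ln \<eta>"
      using abs_ge_self[of "2 * B - ln \<eta>"] unfolding c_def by linarith
    then have "drift i t - drift j t + 2 * B < ln \<eta>"
      using that by linarith
    then show ?thesis
      using \<open>0 < \<eta>\<close> by (metis exp_less_cancel_iff exp_ln)
  qed
  show ?thesis
  proof (rule exI[of _ c], rule ccontr)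
    assume "\<not> (\<forall>t\<in>{0..<T}. \<forall>k<n. drift k t - drift i t < c)"
    then obtain t1 k1 where t1: "t1 \<in> {0..<T}" "k1 < n" "c \<le> drift k1 t1 - drift i t1"
      by (auto simp: not_less)
    have cont: "continuous_on {0..t1} (\<lambda>t. drift k t - drift i t)" if "k \<in> {..<n}" for k
      using that assms t1(1) by (intro continuous_on_diff continuous_on_drift) auto
    have "\<exists>t0\<in>{0<..t1}. (\<exists>k\<in>{..<n}. c \<le> drift k t0 - drift i t0) \<and>
        (\<forall>s\<in>{0..<t0}. \<forall>k\<in>{..<n}. drift k s - drift i s < c)"
      by (rule first_crossing_time[where j = k1]) (use cont start t1 in auto)
    then obtain t0 where t0: "t0 \<in> {0<..t1}" and crossed: "\<exists>k\<in>{..<n}. c \<le> drift k t0 - drift i t0"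
      and before: "\<forall>s\<in>{0..<t0}. \<forall>k\<in>{..<n}. drift k s - drift i s < c"
      by blast
    have "(MAX k\<in>{..<n}. drift k t0) \<in> (\<lambda>k. drift k t0) ` {..<n}"
      using n_pos by (intro Max_in) auto
    then obtain j where "j < n" and "drift j t0 = (MAX k\<in>{..<n}. drift k t0)"
      by auto
    then have j_max: "\<And>k. k < n \<Longrightarrow> drift k t0 \<le> drift j t0"
      by simp
    with crossed have gap: "c \<le> drift j t0 - drift i t0"
      by force
    have "t0 \<in> {0<..<T}"
      using t0 t1(1) by auto
    then obtain s where "s \<in> {0..<t0}" "drift j t0 - drift i t0 \<le> drift j s - drift i s"
      using drift_gap_attained_earlier[OF assms \<open>j < n\<close> _ j_max L \<eta> small[OF gap]] by blast
    then show False
      using before gap \<open>j < n\<close> by force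
  qed
qed

lemma weight_bounded_below:
  assumes "i < n"
  shows "\<exists>\<epsilon>>0. \<forall>t\<in>{0..<T}. \<epsilon> \<le> weight i t"
proof -
  obtain c where c: "\<forall>t\<in>{0..<T}. \<forall>k<n. drift k t - drift i t < c"
    using drift_gap_bounded[OF assms] by blast
  have "1 / (real n * exp (c + 2 * B)) \<le> weight i t" if "t \<in> {0..<T}" for t
    unfolding weight_def
  proof (rule share_ge_if_dominates)
    fix k assume "k < n"
    then have "drift k t - drift i t \<le> c"
      using c that by (simp add: less_imp_le)
    then show "x k t \<le> exp (c + 2 * B) * x i t"
      using x_le_exp_mult_if_drift_gap_le[OF \<open>k < n\<close> assms that] by blast
  qed (use assms that x_pos in auto)
  moreover have "0 < 1 / (real n * exp (c + 2 * B))"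
    using n_pos by simp
  ultimately show ?thesis
    by blast
qed

end

lemma market_path_if_solves_on:
  assumes sol: "solves_on n \<delta> g W X T \<omega>" and "0 < n" and "admissible \<delta> g"
    and "filterlim g at_bot (at_right 0)"
    and "\<And>k t. k < n \<Longrightarrow> t \<in> {0..<T} \<Longrightarrow> \<bar>W k t \<omega> - W k 0 \<omega>\<bar> \<le> B"
  shows "market_path n \<delta> T B g (\<lambda>k t. X k t \<omega>) (\<lambda>k t. W k t \<omega> - W k 0 \<omega>)"
proof
  show "continuous_on {0<..<1-\<delta>} g" "filterlim g at_top (at_left (1-\<delta>))"
    using assms(3) unfolding admissible_def by auto
  show "\<And>k. k < n \<Longrightarrow> continuous_on {0..<T} (\<lambda>t. X k t \<omega>)"
    "\<And>k t. k < n \<Longrightarrow> t \<in> {0..<T} \<Longrightarrow> 0 < X k t \<omega>"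
    using sol unfolding solves_on_def by blast+
  show "\<And>k t. k < n \<Longrightarrow> t \<in> {0..<T} \<Longrightarrow> X k t \<omega> / (\<Sum>j<n. X j t \<omega>) \<in> {0<..<1-\<delta>}"
    "\<And>k t. k < n \<Longrightarrow> t \<in> {0..<T} \<Longrightarrow> ln (X k t \<omega>) = ln (X k 0 \<omega>)
       - integral {0..t} (\<lambda>s. g (X k s \<omega> / (\<Sum>j<n. X j s \<omega>))) + (W k t \<omega> - W k 0 \<omega>)"
    using sol unfolding solves_on_def mweight_def cap_def by blast+
qed (use assms in auto)

theorem mainTheorem8:
  fixes M :: "'a measure" and W X :: "nat \<Rightarrow> real \<Rightarrow> 'a \<Rightarrow> real"
    and g :: "real \<Rightarrow> real" and n :: nat and \<delta> :: real
  assumes "prob_space M"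
    and "n \<ge> 2"
    and "0 < \<delta>" and "\<delta> < 1/2"
    and "admissible \<delta> g"
    and "Liminf (at_right 0) (\<lambda>x. ereal (x * g x)) > -\<infinity>"
    and "Limsup (at_right 0) (\<lambda>x. ereal (x * g x)) < 0"
    and "std_BM M n W"
    and "\<forall>i<n. adapted_to M (bm_filt M n W) (X i)"
    and "\<forall>\<omega>\<in>space M. \<forall>i<n. X i 0 \<omega> > 0 \<and> mweight n X i 0 \<omega> \<in> {0<..<1-\<delta>}"
  shows "AE \<omega> in M. \<forall>T>0. solves_on n \<delta> g W X T \<omega> \<longrightarrow>
           (\<forall>i<n. \<exists>\<epsilon>>0. \<forall>t\<in>{0..<T}. mweight n X i t \<omega> \<ge> \<epsilon>)"
proof (rule AE_I2, intro allI impI)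
  fix \<omega> T i assume "\<omega> \<in> space M" "0 < T" and sol: "solves_on n \<delta> g W X T \<omega>" and "i < n"
  have "\<forall>\<omega>\<in>space M. \<forall>k<n. W k 0 \<omega> = 0 \<and> continuous_on {0..} (\<lambda>t. W k t \<omega>)"
    using assms(8) unfolding std_BM_def by blast
  then have "continuous_on {0..} (\<lambda>t. W k t \<omega>)" if "k \<in> {..<n}" for k
    using \<open>\<omega> \<in> space M\<close> that by blast
  then have "continuous_on {0..T} (\<lambda>t. W k t \<omega>)" if "k \<in> {..<n}" for k
    using that continuous_on_subset by fastforce
  then have noise_cont: "continuous_on {0..T} (\<lambda>t. W k t \<omega> - W k 0 \<omega>)" if "k \<in> {..<n}" for k
    using that by (intro continuous_on_diff continuous_on_const)
  obtain B where B: "\<forall>k\<in>{..<n}. \<forall>t\<in>{0..T}. \<bar>W k t \<omega> - W k 0 \<omega>\<bar> \<le> B"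
    using uniform_bound_if_continuous_on[where K = "{..<n}" and f = "\<lambda>k t. W k t \<omega> - W k 0 \<omega>"]
      noise_cont by blast
  have "0 < n"
    using assms(2) by simp
  then interpret market_path n \<delta> T B g "\<lambda>k t. X k t \<omega>" "\<lambda>k t. W k t \<omega> - W k 0 \<omega>"
    using B by (intro market_path_if_solves_on[OF sol _ assms(5)]
        filterlim_at_bot_at_right_0_if_Limsup_mult_neg[OF assms(7)]) auto
  show "\<exists>\<epsilon>>0. \<forall>t\<in>{0..<T}. mweight n X i t \<omega> \<ge> \<epsilon>"
    using weight_bounded_below[OF \<open>i < n\<close>] by (simp add: weight_def mweight_def cap_def)
qed

end
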